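(* Let $\gamma,\alpha>0$, $(Y_i)$ i.i.d. Gamma$(\gamma,1)$, $X_n=\sum_{i=1}^{k_n}\lambda_{i,n}(Y_i-\gamma)$ with $|\lambda_{1,n}|\ge|\lambda_{2,n}|\ge\dots>0$, and assume $X_n+\alpha\to G_\alpha$ in distribution, where $G_\alpha\sim$ Gamma$(\alpha,1)$. Then $$\sup_{n\in\mathbb{N}}\mathbb{E}\Big[\Big(L\big(\Gamma(X_n)-(X_n+\alpha)\big)\Big)^2\Big]<\infty.$$
   Context: Gamma$(\gamma,1)$ has density $\frac{1}{\Gamma(\gamma)}x^{\gamma-1}e^{-x}\mathds{1}_{\{x>0\}}$. Laguerre structure on polynomials in $(Y_i)$: generator $Lf=\sum_i\big(Y_i\partial_i^2f+(\gamma-Y_i)\partial_if\big)$ and carré du champ $\Gamma(f,g)=\sum_iY_i\partial_if\partial_ig$, $\Gamma(X)=\Gamma(X,X)$. *)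

theory Defs
  imports "HOL-Probability.Probability"
begin

definition gamma_density :: "real \<Rightarrow> real \<Rightarrow> real" where
  "gamma_density g x = (if x > 0 then x powr (g - 1) * exp (- x) / Gamma g else 0)"

definition pderiv_coord :: "nat \<Rightarrow> ((nat \<Rightarrow> real) \<Rightarrow> real) \<Rightarrow> (nat \<Rightarrow> real) \<Rightarrow> real" where
  "pderiv_coord i f y = deriv (\<lambda>t. f (y(i := t))) (y i)"

text \<open>Laguerre generator, acting on functions of the variables indexed by the finite
  set I (all other partial derivatives vanish for such functions).\<close>
definition laguerre_L :: "real \<Rightarrow> nat set \<Rightarrow> ((nat \<Rightarrow> real) \<Rightarrow> real) \<Rightarrow> (nat \<Rightarrow> real) \<Rightarrow> real" where
  "laguerre_L g I f y =
     (\<Sum>i\<in>I. y i * pderiv_coord i (pderiv_coord i f) y + (g - y i) * pderiv_coord i f y)"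

definition carre_du_champ :: "nat set \<Rightarrow> ((nat \<Rightarrow> real) \<Rightarrow> real) \<Rightarrow> ((nat \<Rightarrow> real) \<Rightarrow> real)
    \<Rightarrow> (nat \<Rightarrow> real) \<Rightarrow> real" where
  "carre_du_champ I f h y = (\<Sum>i\<in>I. y i * pderiv_coord i f y * pderiv_coord i h y)"

end

theory Submission
  imports Defs
begin

text \<open>For \<open>X = (\<Sum>i. \<lambda>\<^sub>i (y\<^sub>i - \<gamma>))\<close> the function \<open>\<Gamma>(X) - (X + \<alpha>)\<close> is again affine, with
  coefficients \<open>\<lambda>\<^sub>i\<^sup>2 - \<lambda>\<^sub>i\<close>, and \<open>L\<close> maps it to \<open>(\<Sum>i. (\<lambda>\<^sub>i - \<lambda>\<^sub>i\<^sup>2) (y\<^sub>i - \<gamma>))\<close>, whose second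
  moment under the Gamma law is \<open>\<gamma> (\<Sum>i. (\<lambda>\<^sub>i - \<lambda>\<^sub>i\<^sup>2)\<^sup>2) \<le> 2 \<gamma> (A + A\<^sup>2)\<close> with \<open>A = (\<Sum>i. \<lambda>\<^sub>i\<^sup>2) = E X\<^sub>n\<^sup>2 / \<gamma>\<close>.
  So it suffices to bound the variances of the \<open>X\<^sub>n\<close>. Their fourth moments are at most
  \<open>6 + 6 / \<gamma>\<close> times the squared variance, so by the Paley--Zygmund inequality \<open>X\<^sub>n\<^sup>2\<close> exceeds half
  its variance with probability bounded below; a diverging variance would therefore contradict
  the tightness of the weakly convergent sequence \<open>X\<^sub>n + \<alpha>\<close>.\<close>

section \<open>Laguerre calculus on affine functions\<close>

lemma pderiv_coord_const [simp]: "pderiv_coord i (\<lambda>_. c) y = 0"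
  unfolding pderiv_coord_def by (rule DERIV_imp_deriv) (rule DERIV_const)

lemma pderiv_coord_affine:
  assumes "finite I" "i \<in> I"
  shows "pderiv_coord i (\<lambda>z. (\<Sum>j\<in>I. a j * z j) + b) y = a i"
proof -
  have "(\<Sum>j\<in>I. a j * (y(i := t)) j) = a i * t + (\<Sum>j\<in>I-{i}. a j * y j)" for t
    using assms by (simp add: sum.remove)
  then have "(\<lambda>t. (\<Sum>j\<in>I. a j * (y(i := t)) j) + b) = (\<lambda>t. a i * t + ((\<Sum>j\<in>I-{i}. a j * y j) + b))"
    by (simp add: add.assoc)
  moreover have "((\<lambda>t. a i * t + ((\<Sum>j\<in>I-{i}. a j * y j) + b)) has_real_derivative a i) (at (y i))"
    by (auto intro!: derivative_eq_intros)
  ultimately show ?thesis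
    unfolding pderiv_coord_def by (simp add: DERIV_imp_deriv)
qed

lemma carre_du_champ_affine:
  assumes "finite I"
  shows "carre_du_champ I (\<lambda>z. (\<Sum>j\<in>I. a j * z j) + b) (\<lambda>z. (\<Sum>j\<in>I. c j * z j) + d) y
       = (\<Sum>i\<in>I. a i * c i * y i)"
  unfolding carre_du_champ_def using assms by (intro sum.cong) (auto simp: pderiv_coord_affine)

lemma laguerre_L_affine:
  assumes "finite I"
  shows "laguerre_L g I (\<lambda>z. (\<Sum>j\<in>I. a j * z j) + b) y = (\<Sum>i\<in>I. a i * (g - y i))"
proof -
  have "pderiv_coord i (\<lambda>z. (\<Sum>j\<in>I. a j * z j) + b) = (\<lambda>_. a i)" if "i \<in> I" for i
    using assms that by (auto simp: pderiv_coord_affine)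
  then show ?thesis
    unfolding laguerre_L_def by (intro sum.cong) (simp_all add: mult.commute)
qed

lemma laguerre_L_carre_du_champ_minus_shift:
  fixes lam :: "nat \<Rightarrow> real"
  assumes "finite I"
  shows "laguerre_L g I
           (\<lambda>y. carre_du_champ I (\<lambda>z. \<Sum>i\<in>I. lam i * (z i - g)) (\<lambda>z. \<Sum>i\<in>I. lam i * (z i - g)) y
                - ((\<Sum>i\<in>I. lam i * (y i - g)) + \<alpha>)) y
       = (\<Sum>i\<in>I. (lam i - (lam i)\<^sup>2) * (y i - g))"
proof -
  have X_affine: "(\<lambda>z. \<Sum>i\<in>I. lam i * (z i - g)) = (\<lambda>z. (\<Sum>j\<in>I. lam j * z j) + - (g * sum lam I))"
    by (simp add: sum_subtractf right_diff_distrib sum_distrib_left mult.commute)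
  have shifted_affine: "(\<lambda>y. carre_du_champ I (\<lambda>z. \<Sum>i\<in>I. lam i * (z i - g)) (\<lambda>z. \<Sum>i\<in>I. lam i * (z i - g)) y
                - ((\<Sum>i\<in>I. lam i * (y i - g)) + \<alpha>))
      = (\<lambda>y. (\<Sum>j\<in>I. ((lam j)\<^sup>2 - lam j) * y j) + (g * sum lam I - \<alpha>))"
    unfolding X_affine carre_du_champ_affine[OF assms]
    by (simp add: sum_subtractf left_diff_distrib power2_eq_square sum_distrib_left algebra_simps)
  show ?thesis
    unfolding shifted_affine laguerre_L_affine[OF assms]
    by (intro sum.cong) (simp_all add: algebra_simps power2_eq_square)
qed

lemma abs_power_le_one_plus_even_power:
  fixes x :: real
  assumes "even q" "p \<le> q"
  shows "\<bar>x ^ p\<bar> \<le> 1 + x ^ q"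
proof (cases "\<bar>x\<bar> \<le> 1")
  case True
  then have "\<bar>x\<bar> ^ p \<le> 1" by (simp add: power_le_one)
  moreover have "0 \<le> x ^ q" using assms(1) by (simp add: zero_le_even_power)
  ultimately show ?thesis by (simp add: power_abs)
next
  case False
  then have "\<bar>x\<bar> ^ p \<le> \<bar>x\<bar> ^ q" using assms(2) by (intro power_increasing) auto
  also have "\<dots> = x ^ q" using assms(1) by (simp add: power_even_abs)
  finally show ?thesis by (simp add: power_abs)
qed

lemma sum_power2_le_power2_sum:
  fixes x :: "'i \<Rightarrow> real"
  assumes "\<And>i. i \<in> I \<Longrightarrow> 0 \<le> x i"
  shows "(\<Sum>i\<in>I. (x i)\<^sup>2) \<le> (\<Sum>i\<in>I. x i)\<^sup>2"
  using assms
proof (induction I rule: infinite_finite_induct)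
  case (insert j J)
  have "0 \<le> 2 * x j * sum x J" using insert.prems by (simp add: sum_nonneg)
  then show ?case using insert by (simp add: power2_eq_square algebra_simps)
qed simp_all

lemma sum_power2_diff_power2_le:
  fixes x :: "'i \<Rightarrow> real"
  assumes C: "(\<Sum>i\<in>I. (x i)\<^sup>2) \<le> C"
  shows "(\<Sum>i\<in>I. (x i - (x i)\<^sup>2)\<^sup>2) \<le> 2 * C + 2 * C\<^sup>2"
proof -
  have "(\<Sum>i\<in>I. (x i - (x i)\<^sup>2)\<^sup>2) \<le> (\<Sum>i\<in>I. 2 * (x i)\<^sup>2 + 2 * ((x i)\<^sup>2)\<^sup>2)"
  proof (rule sum_mono)
    fix i
    have "0 \<le> (x i + (x i)\<^sup>2)\<^sup>2" by simp
    then show "(x i - (x i)\<^sup>2)\<^sup>2 \<le> 2 * (x i)\<^sup>2 + 2 * ((x i)\<^sup>2)\<^sup>2"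
      by (simp add: power2_eq_square algebra_simps)
  qed
  also have "\<dots> = 2 * (\<Sum>i\<in>I. (x i)\<^sup>2) + 2 * (\<Sum>i\<in>I. ((x i)\<^sup>2)\<^sup>2)"
    by (simp add: sum.distrib sum_distrib_left)
  also have "\<dots> \<le> 2 * (\<Sum>i\<in>I. (x i)\<^sup>2) + 2 * (\<Sum>i\<in>I. (x i)\<^sup>2)\<^sup>2"
    using sum_power2_le_power2_sum[of I "\<lambda>i. (x i)\<^sup>2"] by simp
  also have "\<dots> \<le> 2 * C + 2 * C\<^sup>2"
    using C by (intro add_mono mult_left_mono power_mono) (auto simp: sum_nonneg)
  finally show ?thesis .
qed

lemma threshold_indicator_quadratic_minorant:
  fixes a w :: real
  assumes "a > 0"
  shows "a * (w - 1 / 2) - (a * w)\<^sup>2 / 4 \<le> (if 1 / 2 \<le> w then 1 else 0)"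
proof (cases "1 / 2 \<le> w")
  case True
  have "0 \<le> (a * w / 2 - 1)\<^sup>2" by simp
  then have "a * w - (a * w)\<^sup>2 / 4 \<le> 1" by (simp add: power2_eq_square field_simps)
  then show ?thesis using True assms by (simp add: right_diff_distrib)
next
  case False
  then have "a * (w - 1 / 2) < 0" using assms by (simp add: mult_pos_neg)
  moreover have "0 \<le> (a * w)\<^sup>2 / 4" by simp
  moreover have "(if 1 / 2 \<le> w then 1 else 0) = (0::real)" using False by simp
  ultimately show ?thesis by linarith
qed

section \<open>The Gamma density\<close>

lemma gamma_density_nonneg: "g > 0 \<Longrightarrow> 0 \<le> gamma_density g x"
  by (simp add: gamma_density_def)

lemma borel_measurable_gamma_density [measurable]: "gamma_density g \<in> borel_measurable borel"
  unfolding gamma_density_def by measurable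

lemma nn_integral_gamma_density_power:
  assumes g: "g > 0"
  shows "(\<integral>\<^sup>+x. ennreal (gamma_density g x * x ^ m) \<partial>lborel) = ennreal (pochhammer g m)"
proof -
  have Gamma_pos: "Gamma g > 0" using g by simp
  have integrand: "gamma_density g x * x ^ m = indicator {0..} x * x powr (g + real m - 1) / exp x * (1 / Gamma g)" for x
  proof (cases "x > 0")
    case True
    then have "x powr (g - 1) * x ^ m = x powr (g + real m - 1)"
      by (simp add: powr_realpow[symmetric] powr_add[symmetric] algebra_simps)
    then show ?thesis using True by (simp add: gamma_density_def exp_minus field_simps)
  next
    case False
    then show ?thesis by (cases "x = 0") (auto simp: gamma_density_def indicator_def)
  qed
  have "(\<integral>\<^sup>+x. ennreal (gamma_density g x * x ^ m) \<partial>lborel)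
      = (\<integral>\<^sup>+x. ennreal (indicator {0..} x * x powr (g + real m - 1) / exp x) * ennreal (1 / Gamma g) \<partial>lborel)"
    unfolding integrand by (intro nn_integral_cong, subst ennreal_mult[symmetric]) (auto simp: Gamma_pos less_imp_le)
  also have "\<dots> = (\<integral>\<^sup>+x. ennreal (indicator {0..} x * x powr (g + real m - 1) / exp x) \<partial>lborel) * ennreal (1 / Gamma g)"
    by (rule nn_integral_multc) measurable
  also have "\<dots> = ennreal (Gamma (g + real m)) * ennreal (1 / Gamma g)"
    using g by (subst Gamma_conv_nn_integral_real) auto
  also have "\<dots> = ennreal (Gamma (g + real m) / Gamma g)"
    using g Gamma_pos by (simp add: ennreal_mult''[symmetric])
  also have "\<dots> = ennreal (pochhammer g m)"
    using g by (subst pochhammer_Gamma) (auto dest: nonpos_Ints_nonpos)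
  finally show ?thesis .
qed

lemma integrable_gamma_density_power:
  assumes "g > 0"
  shows "integrable lborel (\<lambda>x. gamma_density g x * x ^ m)"
  using assms nn_integral_gamma_density_power[OF assms]
  by (intro integrableI_nonneg) (auto simp: gamma_density_def)

lemma integral_gamma_density_power:
  assumes "g > 0"
  shows "(\<integral>x. gamma_density g x * x ^ m \<partial>lborel) = pochhammer g m"
  using assms nn_integral_gamma_density_power[OF assms] pochhammer_pos[of g m]
  by (subst integral_eq_nn_integral) (auto simp: gamma_density_def)

lemma real_distribution_gamma:
  assumes "g > 0"
  shows "real_distribution (density lborel (\<lambda>x. ennreal (gamma_density g x)))"
proof -
  have "emeasure (density lborel (\<lambda>x. ennreal (gamma_density g x))) UNIV = 1"
    using nn_integral_gamma_density_power[OF assms, of 0] by (simp add: emeasure_density)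
  then show ?thesis
    by (intro real_distribution.intro prob_spaceI) (auto simp: real_distribution_axioms_def)
qed

lemma measure_density_lborel_singleton:
  assumes "f \<in> borel_measurable borel"
  shows "measure (density lborel (\<lambda>x. ennreal (f x))) {a} = 0"
  using assms by (simp add: measure_def emeasure_density nn_integral_indicator_singleton)

section \<open>Moments of weighted sums of independent centred variables\<close>

context prob_space
begin

lemma integrable_power_le_even_power:
  fixes X :: "'a \<Rightarrow> real"
  assumes "X \<in> borel_measurable M" "integrable M (\<lambda>\<omega>. X \<omega> ^ q)" "even q" "p \<le> q"
  shows "integrable M (\<lambda>\<omega>. X \<omega> ^ p)"
proof (rule Bochner_Integration.integrable_bound)
  show "integrable M (\<lambda>\<omega>. 1 + X \<omega> ^ q)" using assms(2) by auto
  show "(\<lambda>\<omega>. X \<omega> ^ p) \<in> borel_measurable M" using assms(1) by measurable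
  have "norm (X \<omega> ^ p) \<le> norm (1 + X \<omega> ^ q)" for \<omega>
    using abs_power_le_one_plus_even_power[OF assms(3,4)] zero_le_even_power[OF assms(3), of "X \<omega>"]
    by simp
  then show "AE \<omega> in M. norm (X \<omega> ^ p) \<le> norm (1 + X \<omega> ^ q)" by simp
qed

lemma indep_var_weighted_sum_component:
  fixes Z :: "nat \<Rightarrow> 'a \<Rightarrow> real"
  assumes indep: "indep_vars (\<lambda>_. borel) Z UNIV" and "finite J" "j \<notin> J"
  shows "indep_var borel (\<lambda>\<omega>. \<Sum>i\<in>J. a i * Z i \<omega>) borel (\<lambda>\<omega>. a j * Z j \<omega>)"
proof -
  have "indep_var (PiM J (\<lambda>_. borel)) (\<lambda>\<omega>. restrict (\<lambda>i. Z i \<omega>) J)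
                  (PiM {j} (\<lambda>_. borel)) (\<lambda>\<omega>. restrict (\<lambda>i. Z i \<omega>) {j})"
    using assms(3) by (intro indep_var_restrict[OF indep]) auto
  moreover have "(\<lambda>f. \<Sum>i\<in>J. a i * f i) \<in> borel_measurable (PiM J (\<lambda>_. borel))"
    by measurable
  moreover have "(\<lambda>f. a j * f j) \<in> borel_measurable (PiM {j} (\<lambda>_. borel :: real measure))"
    using measurable_component_singleton[of j "{j}" "\<lambda>_. borel :: real measure"] by measurable
  ultimately have "indep_var borel ((\<lambda>f. \<Sum>i\<in>J. a i * f i) \<circ> (\<lambda>\<omega>. restrict (\<lambda>i. Z i \<omega>) J))
                     borel ((\<lambda>f. a j * f j) \<circ> (\<lambda>\<omega>. restrict (\<lambda>i. Z i \<omega>) {j}))"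
    by (rule indep_var_compose)
  moreover have "(\<lambda>f. \<Sum>i\<in>J. a i * f i) \<circ> (\<lambda>\<omega>. restrict (\<lambda>i. Z i \<omega>) J) = (\<lambda>\<omega>. \<Sum>i\<in>J. a i * Z i \<omega>)"
    by (auto intro!: sum.cong)
  ultimately show ?thesis by (simp add: comp_def)
qed

lemma indep_sum_moments:
  fixes S Z :: "'a \<Rightarrow> real"
  assumes indep: "indep_var borel S borel Z"
    and S4: "integrable M (\<lambda>\<omega>. S \<omega> ^ 4)" and Z4: "integrable M (\<lambda>\<omega>. Z \<omega> ^ 4)"
    and S1: "expectation S = 0" and Z1: "expectation Z = 0"
  shows "integrable M (\<lambda>\<omega>. (S \<omega> + Z \<omega>) ^ 4)"
    and "expectation (\<lambda>\<omega>. S \<omega> + Z \<omega>) = 0"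
    and "expectation (\<lambda>\<omega>. (S \<omega> + Z \<omega>)\<^sup>2) = expectation (\<lambda>\<omega>. S \<omega> ^ 2) + expectation (\<lambda>\<omega>. Z \<omega> ^ 2)"
    and "expectation (\<lambda>\<omega>. (S \<omega> + Z \<omega>) ^ 4) = expectation (\<lambda>\<omega>. S \<omega> ^ 4)
           + 6 * expectation (\<lambda>\<omega>. S \<omega> ^ 2) * expectation (\<lambda>\<omega>. Z \<omega> ^ 2) + expectation (\<lambda>\<omega>. Z \<omega> ^ 4)"
proof -
  have SI: "integrable M (\<lambda>\<omega>. S \<omega> ^ p)" if "p \<le> 4" for p
    using integrable_power_le_even_power[OF indep_var_rv1[OF indep] S4 _ that] by simp
  have ZI: "integrable M (\<lambda>\<omega>. Z \<omega> ^ q)" if "q \<le> 4" for q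
    using integrable_power_le_even_power[OF indep_var_rv2[OF indep] Z4 _ that] by simp
  have indep_powers: "indep_var borel (\<lambda>\<omega>. S \<omega> ^ p) borel (\<lambda>\<omega>. Z \<omega> ^ q)" for p q
    using indep_var_compose[OF indep, of "\<lambda>x. x ^ p" borel "\<lambda>x. x ^ q" borel] by (simp add: comp_def)
  have mixed_integrable: "integrable M (\<lambda>\<omega>. S \<omega> ^ p * Z \<omega> ^ q)" if "p \<le> 4" "q \<le> 4" for p q
    by (rule indep_var_integrable[OF indep_powers SI[OF that(1)] ZI[OF that(2)]])
  have mixed_moment: "expectation (\<lambda>\<omega>. S \<omega> ^ p * Z \<omega> ^ q)
      = expectation (\<lambda>\<omega>. S \<omega> ^ p) * expectation (\<lambda>\<omega>. Z \<omega> ^ q)" if "p \<le> 4" "q \<le> 4" for p q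
    by (rule indep_var_lebesgue_integral[OF indep_powers SI[OF that(1)] ZI[OF that(2)]])
  have expand2: "(S \<omega> + Z \<omega>)\<^sup>2 = S \<omega> ^ 2 + 2 * (S \<omega> ^ 1 * Z \<omega> ^ 1) + Z \<omega> ^ 2" for \<omega>
    by (simp add: power2_eq_square algebra_simps)
  have expand4: "(S \<omega> + Z \<omega>) ^ 4 = S \<omega> ^ 4 + 4 * (S \<omega> ^ 3 * Z \<omega> ^ 1) + 6 * (S \<omega> ^ 2 * Z \<omega> ^ 2)
      + 4 * (S \<omega> ^ 1 * Z \<omega> ^ 3) + Z \<omega> ^ 4" for \<omega>
    by (simp add: eval_nat_numeral algebra_simps)
  show "integrable M (\<lambda>\<omega>. (S \<omega> + Z \<omega>) ^ 4)"
    unfolding expand4 using S4 Z4 mixed_integrable[of 3 1] mixed_integrable[of 2 2] mixed_integrable[of 1 3]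
    by simp
  show "expectation (\<lambda>\<omega>. S \<omega> + Z \<omega>) = 0"
    using SI[of 1] ZI[of 1] S1 Z1 by simp
  show "expectation (\<lambda>\<omega>. (S \<omega> + Z \<omega>)\<^sup>2) = expectation (\<lambda>\<omega>. S \<omega> ^ 2) + expectation (\<lambda>\<omega>. Z \<omega> ^ 2)"
    unfolding expand2 using SI[of 2] ZI[of 2] mixed_integrable[of 1 1] mixed_moment[of 1 1] S1 Z1
    by simp
  show "expectation (\<lambda>\<omega>. (S \<omega> + Z \<omega>) ^ 4) = expectation (\<lambda>\<omega>. S \<omega> ^ 4)
           + 6 * expectation (\<lambda>\<omega>. S \<omega> ^ 2) * expectation (\<lambda>\<omega>. Z \<omega> ^ 2) + expectation (\<lambda>\<omega>. Z \<omega> ^ 4)"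
    unfolding expand4
    using S4 Z4 mixed_integrable[of 3 1] mixed_integrable[of 2 2] mixed_integrable[of 1 3]
      mixed_moment[of 3 1] mixed_moment[of 2 2] mixed_moment[of 1 3] S1 Z1
    by simp
qed

lemma weighted_sum_moments:
  fixes Z :: "nat \<Rightarrow> 'a \<Rightarrow> real" and a :: "nat \<Rightarrow> real"
  assumes indep: "indep_vars (\<lambda>_. borel) Z UNIV"
    and Z4: "\<And>i. integrable M (\<lambda>\<omega>. Z i \<omega> ^ 4)"
    and Z1: "\<And>i. expectation (Z i) = 0"
    and Z2: "\<And>i. expectation (\<lambda>\<omega>. Z i \<omega> ^ 2) = v"
    and Z4_le: "\<And>i. expectation (\<lambda>\<omega>. Z i \<omega> ^ 4) \<le> c"
    and "finite J"
  shows "integrable M (\<lambda>\<omega>. (\<Sum>i\<in>J. a i * Z i \<omega>) ^ 4) \<and>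
    expectation (\<lambda>\<omega>. \<Sum>i\<in>J. a i * Z i \<omega>) = 0 \<and>
    expectation (\<lambda>\<omega>. (\<Sum>i\<in>J. a i * Z i \<omega>) ^ 2) = v * (\<Sum>i\<in>J. (a i)\<^sup>2) \<and>
    expectation (\<lambda>\<omega>. (\<Sum>i\<in>J. a i * Z i \<omega>) ^ 4)
      \<le> 3 * v\<^sup>2 * (\<Sum>i\<in>J. (a i)\<^sup>2)\<^sup>2 + c * (\<Sum>i\<in>J. a i ^ 4)"
  using \<open>finite J\<close>
proof (induction J rule: finite_induct)
  case (insert j J)
  define S where "S \<omega> = (\<Sum>i\<in>J. a i * Z i \<omega>)" for \<omega>
  define A where "A = (\<Sum>i\<in>J. (a i)\<^sup>2)"
  define B where "B = (\<Sum>i\<in>J. a i ^ 4)"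
  have S: "integrable M (\<lambda>\<omega>. S \<omega> ^ 4)" "expectation S = 0"
    "expectation (\<lambda>\<omega>. S \<omega> ^ 2) = v * A" "expectation (\<lambda>\<omega>. S \<omega> ^ 4) \<le> 3 * v\<^sup>2 * A\<^sup>2 + c * B"
    using insert.IH unfolding S_def A_def B_def by auto
  have aZ: "integrable M (\<lambda>\<omega>. (a j * Z j \<omega>) ^ 4)" "expectation (\<lambda>\<omega>. a j * Z j \<omega>) = 0"
    "expectation (\<lambda>\<omega>. (a j * Z j \<omega>) ^ 2) = (a j)\<^sup>2 * v"
    "expectation (\<lambda>\<omega>. (a j * Z j \<omega>) ^ 4) \<le> a j ^ 4 * c"
    using Z4[of j] Z1[of j] Z2[of j] mult_left_mono[OF Z4_le[of j], of "a j ^ 4"]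
    by (simp_all add: power_mult_distrib)
  have "indep_var borel S borel (\<lambda>\<omega>. a j * Z j \<omega>)"
    unfolding S_def using indep insert.hyps by (rule indep_var_weighted_sum_component)
  note step = indep_sum_moments[OF this S(1) aZ(1) S(2) aZ(2)]
  have sum_insert: "(\<Sum>i\<in>insert j J. a i * Z i \<omega>) = S \<omega> + a j * Z j \<omega>" for \<omega>
    using insert.hyps by (simp add: S_def add.commute)
  have "3 * v\<^sup>2 * ((a j)\<^sup>2 + A)\<^sup>2 + c * (a j ^ 4 + B)
      = (3 * v\<^sup>2 * A\<^sup>2 + c * B + 6 * (v * A) * ((a j)\<^sup>2 * v) + a j ^ 4 * c) + 3 * (v * (a j)\<^sup>2)\<^sup>2"
    by (simp add: power2_eq_square power4_eq_xxxx algebra_simps)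
  then have "3 * v\<^sup>2 * A\<^sup>2 + c * B + 6 * (v * A) * ((a j)\<^sup>2 * v) + a j ^ 4 * c
      \<le> 3 * v\<^sup>2 * ((a j)\<^sup>2 + A)\<^sup>2 + c * (a j ^ 4 + B)"
    by simp
  then have fourth: "expectation (\<lambda>\<omega>. (S \<omega> + a j * Z j \<omega>) ^ 4)
      \<le> 3 * v\<^sup>2 * ((a j)\<^sup>2 + A)\<^sup>2 + c * (a j ^ 4 + B)"
    using step(4) S(3,4) aZ(3,4) by simp
  have second: "expectation (\<lambda>\<omega>. (S \<omega> + a j * Z j \<omega>) ^ 2) = v * ((a j)\<^sup>2 + A)"
    using step(3) S(3) aZ(3) by (simp add: algebra_simps)
  have sums: "(\<Sum>i\<in>insert j J. (a i)\<^sup>2) = (a j)\<^sup>2 + A" "(\<Sum>i\<in>insert j J. a i ^ 4) = a j ^ 4 + B"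
    using insert.hyps by (simp_all add: A_def B_def)
  show ?case
    unfolding sum_insert sums using step(1,2) second fourth by blast
qed simp

lemma gamma_distributed_moment:
  assumes g: "g > 0" and X: "distributed M lborel X (\<lambda>x. ennreal (gamma_density g x))"
  shows "integrable M (\<lambda>\<omega>. X \<omega> ^ m)" "expectation (\<lambda>\<omega>. X \<omega> ^ m) = pochhammer g m"
  using distributed_integrable[OF X, of "\<lambda>x. x ^ m"] distributed_integral[OF X, of "\<lambda>x. x ^ m"]
    integrable_gamma_density_power[OF g] integral_gamma_density_power[OF g] gamma_density_nonneg[OF g]
  by simp_all

lemma gamma_distributed_central_moments:
  assumes g: "g > 0" and X: "distributed M lborel X (\<lambda>x. ennreal (gamma_density g x))"
  shows "integrable M (\<lambda>\<omega>. (X \<omega> - g) ^ 4)"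
    and "expectation (\<lambda>\<omega>. X \<omega> - g) = 0"
    and "expectation (\<lambda>\<omega>. (X \<omega> - g)\<^sup>2) = g"
    and "expectation (\<lambda>\<omega>. (X \<omega> - g) ^ 4) = 3 * g\<^sup>2 + 6 * g"
proof -
  note moment = gamma_distributed_moment[OF g X]
  have X1: "integrable M X" "expectation X = g"
    using moment[of 1] by simp_all
  have "pochhammer g 2 = g * (g + 1)" "pochhammer g 3 = g * (g + 1) * (g + 2)"
    "pochhammer g 4 = g * (g + 1) * (g + 2) * (g + 3)"
    by (simp_all add: pochhammer_Suc numeral_eq_Suc add.assoc)
  then have X234: "expectation (\<lambda>\<omega>. X \<omega> ^ 2) = g * (g + 1)"
    "expectation (\<lambda>\<omega>. X \<omega> ^ 3) = g * (g + 1) * (g + 2)"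
    "expectation (\<lambda>\<omega>. X \<omega> ^ 4) = g * (g + 1) * (g + 2) * (g + 3)"
    using moment(2) by simp_all
  have expand2: "(X \<omega> - g)\<^sup>2 = X \<omega> ^ 2 - (2 * g) * X \<omega> + g\<^sup>2" for \<omega>
    by (simp add: eval_nat_numeral algebra_simps)
  have expand4: "(X \<omega> - g) ^ 4 = X \<omega> ^ 4 - (4 * g) * X \<omega> ^ 3 + (6 * g\<^sup>2) * X \<omega> ^ 2 - (4 * g ^ 3) * X \<omega> + g ^ 4" for \<omega>
    by (simp add: eval_nat_numeral algebra_simps)
  show "integrable M (\<lambda>\<omega>. (X \<omega> - g) ^ 4)"
    unfolding expand4 using moment X1 by auto
  show "expectation (\<lambda>\<omega>. X \<omega> - g) = 0"
    using X1 by (simp add: prob_space)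
  show "expectation (\<lambda>\<omega>. (X \<omega> - g)\<^sup>2) = g"
    unfolding expand2 using moment(1) X1 X234 by (simp add: prob_space) (simp add: algebra_simps power2_eq_square)
  show "expectation (\<lambda>\<omega>. (X \<omega> - g) ^ 4) = 3 * g\<^sup>2 + 6 * g"
    unfolding expand4 using moment(1) X1 X234 by (simp add: prob_space) (simp add: algebra_simps power2_eq_square power3_eq_cube power4_eq_xxxx)
qed

lemma centered_gamma_weighted_sum_moments:
  fixes Y :: "nat \<Rightarrow> 'a \<Rightarrow> real" and a :: "nat \<Rightarrow> real"
  assumes g: "g > 0" and indep: "indep_vars (\<lambda>_. borel) Y UNIV"
    and Y: "\<And>i. distributed M lborel (Y i) (\<lambda>x. ennreal (gamma_density g x))"
    and J: "finite J"
  shows "integrable M (\<lambda>\<omega>. (\<Sum>i\<in>J. a i * (Y i \<omega> - g)) ^ 4)"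
    and "expectation (\<lambda>\<omega>. (\<Sum>i\<in>J. a i * (Y i \<omega> - g)) ^ 2) = g * (\<Sum>i\<in>J. (a i)\<^sup>2)"
    and "expectation (\<lambda>\<omega>. (\<Sum>i\<in>J. a i * (Y i \<omega> - g)) ^ 4)
           \<le> (6 + 6 / g) * (expectation (\<lambda>\<omega>. (\<Sum>i\<in>J. a i * (Y i \<omega> - g)) ^ 2))\<^sup>2"
proof -
  have "indep_vars (\<lambda>_. borel) (\<lambda>i \<omega>. Y i \<omega> - g) UNIV"
    using indep by (rule indep_vars_compose2) simp
  note moments = weighted_sum_moments[OF this _ _ _ _ J, where c = "3 * g\<^sup>2 + 6 * g" and a = a]
    gamma_distributed_central_moments[OF g Y]
  then show "integrable M (\<lambda>\<omega>. (\<Sum>i\<in>J. a i * (Y i \<omega> - g)) ^ 4)"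
    and second: "expectation (\<lambda>\<omega>. (\<Sum>i\<in>J. a i * (Y i \<omega> - g)) ^ 2) = g * (\<Sum>i\<in>J. (a i)\<^sup>2)"
    by auto
  have "(\<Sum>i\<in>J. a i ^ 4) \<le> (\<Sum>i\<in>J. (a i)\<^sup>2)\<^sup>2"
    using sum_power2_le_power2_sum[of J "\<lambda>i. (a i)\<^sup>2"] by (simp add: power_mult[symmetric])
  then have "(3 * g\<^sup>2 + 6 * g) * (\<Sum>i\<in>J. a i ^ 4) \<le> (3 * g\<^sup>2 + 6 * g) * (\<Sum>i\<in>J. (a i)\<^sup>2)\<^sup>2"
    using g by (intro mult_left_mono) auto
  moreover have "expectation (\<lambda>\<omega>. (\<Sum>i\<in>J. a i * (Y i \<omega> - g)) ^ 4)
      \<le> 3 * g\<^sup>2 * (\<Sum>i\<in>J. (a i)\<^sup>2)\<^sup>2 + (3 * g\<^sup>2 + 6 * g) * (\<Sum>i\<in>J. a i ^ 4)"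
    using moments by auto
  ultimately have "expectation (\<lambda>\<omega>. (\<Sum>i\<in>J. a i * (Y i \<omega> - g)) ^ 4)
      \<le> 3 * g\<^sup>2 * (\<Sum>i\<in>J. (a i)\<^sup>2)\<^sup>2 + (3 * g\<^sup>2 + 6 * g) * (\<Sum>i\<in>J. (a i)\<^sup>2)\<^sup>2"
    by linarith
  also have "\<dots> = (6 + 6 / g) * (g * (\<Sum>i\<in>J. (a i)\<^sup>2))\<^sup>2"
    using g by (simp add: field_simps power2_eq_square)
  finally show "expectation (\<lambda>\<omega>. (\<Sum>i\<in>J. a i * (Y i \<omega> - g)) ^ 4)
      \<le> (6 + 6 / g) * (expectation (\<lambda>\<omega>. (\<Sum>i\<in>J. a i * (Y i \<omega> - g)) ^ 2))\<^sup>2"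
    unfolding second .
qed

lemma nn_integral_centered_gamma_weighted_sum_square:
  fixes Y :: "nat \<Rightarrow> 'a \<Rightarrow> real" and a :: "nat \<Rightarrow> real"
  assumes g: "g > 0" and indep: "indep_vars (\<lambda>_. borel) Y UNIV"
    and Y: "\<And>i. distributed M lborel (Y i) (\<lambda>x. ennreal (gamma_density g x))"
    and J: "finite J"
  shows "(\<integral>\<^sup>+\<omega>. ennreal ((\<Sum>i\<in>J. a i * (Y i \<omega> - g))\<^sup>2) \<partial>M) = ennreal (g * (\<Sum>i\<in>J. (a i)\<^sup>2))"
proof -
  have "Y i \<in> borel_measurable M" for i
    using indep by (simp add: indep_vars_def)
  then have "(\<lambda>\<omega>. \<Sum>i\<in>J. a i * (Y i \<omega> - g)) \<in> borel_measurable M"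
    by measurable
  then have "integrable M (\<lambda>\<omega>. (\<Sum>i\<in>J. a i * (Y i \<omega> - g))\<^sup>2)"
    using centered_gamma_weighted_sum_moments(1)[OF g indep Y J]
    by (rule integrable_power_le_even_power) simp_all
  then show ?thesis
    using centered_gamma_weighted_sum_moments(2)[OF g indep Y J] by (simp add: nn_integral_eq_integral)
qed

lemma nn_integral_laguerre_L_square_gamma:
  fixes Y :: "nat \<Rightarrow> 'a \<Rightarrow> real" and lam :: "nat \<Rightarrow> real"
  assumes g: "g > 0" and indep: "indep_vars (\<lambda>_. borel) Y UNIV"
    and Y: "\<And>i. distributed M lborel (Y i) (\<lambda>x. ennreal (gamma_density g x))"
    and I: "finite I"
  shows "(\<integral>\<^sup>+\<omega>. ennreal ((laguerre_L g I
             (\<lambda>y. carre_du_champ I (\<lambda>z. \<Sum>i\<in>I. lam i * (z i - g)) (\<lambda>z. \<Sum>i\<in>I. lam i * (z i - g)) y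
                  - ((\<Sum>i\<in>I. lam i * (y i - g)) + \<alpha>))
             (\<lambda>i. Y i \<omega>))\<^sup>2) \<partial>M)
       = ennreal (g * (\<Sum>i\<in>I. (lam i - (lam i)\<^sup>2)\<^sup>2))"
  unfolding laguerre_L_carre_du_champ_minus_shift[OF I]
  by (rule nn_integral_centered_gamma_weighted_sum_square[OF g indep Y I])

end

section \<open>Anticoncentration and tightness\<close>

context prob_space
begin

text \<open>A Paley--Zygmund inequality, obtained by integrating
  \<open>threshold_indicator_quadratic_minorant\<close> with \<open>w = X\<^sup>2 / s\<close> and \<open>a = 1 / K\<close>.\<close>
lemma prob_power2_ge_half_second_moment:
  fixes X :: "'a \<Rightarrow> real"
  assumes X: "X \<in> borel_measurable M" and X4: "integrable M (\<lambda>\<omega>. X \<omega> ^ 4)"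
    and s: "expectation (\<lambda>\<omega>. X \<omega> ^ 2) = s" "s > 0"
    and K: "K > 0" and fourth: "expectation (\<lambda>\<omega>. X \<omega> ^ 4) \<le> K * s\<^sup>2"
  shows "1 / (4 * K) \<le> prob {\<omega> \<in> space M. s / 2 \<le> X \<omega> ^ 2}"
proof -
  define a where "a = 1 / K"
  define E where "E = {\<omega> \<in> space M. s / 2 \<le> X \<omega> ^ 2}"
  define q where "q \<omega> = a * (X \<omega> ^ 2 / s - 1 / 2) - (a * (X \<omega> ^ 2 / s))\<^sup>2 / 4" for \<omega>
  have a: "a > 0" using K by (simp add: a_def)
  have E: "E \<in> events" unfolding E_def using X by measurable
  have X2: "integrable M (\<lambda>\<omega>. X \<omega> ^ 2)"
    using integrable_power_le_even_power[OF X X4] by simp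
  have q_split: "q \<omega> = (a / s) * X \<omega> ^ 2 - a / 2 - (a\<^sup>2 / (4 * s\<^sup>2)) * X \<omega> ^ 4" for \<omega>
    unfolding q_def by (simp add: field_simps power2_eq_square power4_eq_xxxx)
  have "1 / (4 * K) \<le> a / 2 - (a\<^sup>2 / (4 * s\<^sup>2)) * (K * s\<^sup>2)"
    using K s(2) by (simp add: a_def field_simps power2_eq_square)
  also have "\<dots> \<le> a / 2 - (a\<^sup>2 / (4 * s\<^sup>2)) * expectation (\<lambda>\<omega>. X \<omega> ^ 4)"
    using fourth by (intro diff_left_mono mult_left_mono) auto
  also have "\<dots> = expectation q"
    unfolding q_split using X2 X4 s by (simp add: prob_space)
  also have "\<dots> \<le> expectation (indicator E)"
  proof (rule integral_mono)
    show "integrable M q" unfolding q_split using X2 X4 by simp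
    show "integrable M (indicator E :: 'a \<Rightarrow> real)"
      using E by (simp add: emeasure_eq_measure)
    show "q \<omega> \<le> indicator E \<omega>" if "\<omega> \<in> space M" for \<omega>
    proof -
      have "q \<omega> \<le> (if 1 / 2 \<le> X \<omega> ^ 2 / s then 1 else 0)"
        unfolding q_def by (rule threshold_indicator_quadratic_minorant[OF a])
      also have "(1 / 2 \<le> X \<omega> ^ 2 / s) = (\<omega> \<in> E)"
        using s(2) that by (simp add: E_def field_simps)
      finally show ?thesis by (simp add: indicator_def split: if_splits)
    qed
  qed
  also have "\<dots> = prob E" using E by simp
  finally show ?thesis unfolding E_def .
qed

lemma weak_conv_tail_prob_small:
  fixes W :: "nat \<Rightarrow> 'a \<Rightarrow> real"
  assumes W: "\<And>n. W n \<in> borel_measurable M"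
    and weak_conv: "weak_conv_m (\<lambda>n. distr M borel (W n)) G"
    and G: "real_distribution G" and no_atoms: "\<And>x. measure G {x} = 0"
    and "\<epsilon> > 0"
  shows "\<exists>R. \<forall>\<^sub>F n in sequentially. prob {\<omega> \<in> space M. R < \<bar>W n \<omega>\<bar>} < \<epsilon>"
proof -
  interpret G: real_distribution G by fact
  have "\<forall>\<^sub>F x in at_top. 1 - \<epsilon> / 4 < cdf G x"
    using G.cdf_lim_at_top_prob \<open>\<epsilon> > 0\<close> by (intro order_tendstoD(1)) auto
  moreover have "\<forall>\<^sub>F x in at_top. cdf G (- x) < \<epsilon> / 4"
    using filterlim_compose[OF G.cdf_lim_at_bot filterlim_uminus_at_bot_at_top] \<open>\<epsilon> > 0\<close>
    by (intro order_tendstoD(2)) auto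
  ultimately have "\<forall>\<^sub>F x in at_top. 1 - \<epsilon> / 4 < cdf G x \<and> cdf G (- x) < \<epsilon> / 4"
    by (rule eventually_conj)
  then obtain R where R: "1 - \<epsilon> / 4 < cdf G R" "cdf G (- R) < \<epsilon> / 4"
    unfolding eventually_at_top_linorder by blast
  have cdf_W: "cdf (distr M borel (W n)) x = prob {\<omega> \<in> space M. W n \<omega> \<le> x}" for n x
    unfolding cdf_def using W[of n] by (subst measure_distr) (auto intro!: arg_cong[where f = prob])
  have lim: "(\<lambda>n. cdf (distr M borel (W n)) x) \<longlonglongrightarrow> cdf G x" for x
    using weak_conv no_atoms unfolding weak_conv_m_def weak_conv_def G.isCont_cdf by blast
  have "\<forall>\<^sub>F n in sequentially. 1 - \<epsilon> / 2 < cdf (distr M borel (W n)) R"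
    using R(1) \<open>\<epsilon> > 0\<close> by (intro order_tendstoD(1)[OF lim]) simp
  moreover have "\<forall>\<^sub>F n in sequentially. cdf (distr M borel (W n)) (- R) < \<epsilon> / 2"
    using R(2) \<open>\<epsilon> > 0\<close> by (intro order_tendstoD(2)[OF lim]) simp
  ultimately have "\<forall>\<^sub>F n in sequentially. prob {\<omega> \<in> space M. W n \<omega> \<le> - R} + (1 - prob {\<omega> \<in> space M. W n \<omega> \<le> R}) < \<epsilon>"
    unfolding cdf_W by eventually_elim linarith
  then show ?thesis
  proof (intro exI, elim eventually_mono)
    fix n
    let ?A = "{\<omega> \<in> space M. W n \<omega> \<le> - R}" and ?B = "{\<omega> \<in> space M. W n \<omega> \<le> R}"
    have events: "?A \<in> events" "?B \<in> events" using W[of n] by measurable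
    have "prob {\<omega> \<in> space M. R < \<bar>W n \<omega>\<bar>} \<le> prob (?A \<union> (space M - ?B))"
      using events by (intro finite_measure_mono) auto
    also have "\<dots> \<le> prob ?A + prob (space M - ?B)"
      using events by (intro measure_Un_le) auto
    also have "\<dots> = prob ?A + (1 - prob ?B)"
      using events by (simp add: prob_compl)
    finally show "prob ?A + (1 - prob ?B) < \<epsilon> \<Longrightarrow> prob {\<omega> \<in> space M. R < \<bar>W n \<omega>\<bar>} < \<epsilon>"
      by linarith
  qed
qed

text \<open>If the fourth moments are controlled by the squared second moments, a second moment
  \<open>s > 2 R\<^sup>2\<close> would put probability at least \<open>1 / (4 K)\<close> on \<open>\<bar>X\<bar> > R\<close>.\<close>
lemma second_moments_bounded_if_tail_prob_small:
  fixes X :: "nat \<Rightarrow> 'a \<Rightarrow> real"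
  assumes X: "\<And>n. X n \<in> borel_measurable M" and X4: "\<And>n. integrable M (\<lambda>\<omega>. X n \<omega> ^ 4)"
    and K: "K > 0"
    and fourth: "\<And>n. expectation (\<lambda>\<omega>. X n \<omega> ^ 4) \<le> K * (expectation (\<lambda>\<omega>. X n \<omega> ^ 2))\<^sup>2"
    and tail: "\<forall>\<^sub>F n in sequentially. prob {\<omega> \<in> space M. R < \<bar>X n \<omega>\<bar>} < 1 / (4 * K)"
  shows "\<exists>B. \<forall>n. expectation (\<lambda>\<omega>. X n \<omega> ^ 2) \<le> B"
proof -
  obtain N where N: "\<And>n. N \<le> n \<Longrightarrow> prob {\<omega> \<in> space M. R < \<bar>X n \<omega>\<bar>} < 1 / (4 * K)"
    using tail by (auto simp: eventually_sequentially)
  have "expectation (\<lambda>\<omega>. X n \<omega> ^ 2) \<le> 2 * R\<^sup>2" if "N \<le> n" for n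
  proof (rule ccontr)
    define s where "s = expectation (\<lambda>\<omega>. X n \<omega> ^ 2)"
    assume "\<not> expectation (\<lambda>\<omega>. X n \<omega> ^ 2) \<le> 2 * R\<^sup>2"
    then have big: "2 * R\<^sup>2 < s" by (simp add: s_def)
    have "{\<omega> \<in> space M. s / 2 \<le> X n \<omega> ^ 2} \<subseteq> {\<omega> \<in> space M. R < \<bar>X n \<omega>\<bar>}"
    proof safe
      fix \<omega> assume "\<omega> \<in> space M" "s / 2 \<le> X n \<omega> ^ 2"
      then have "\<bar>R\<bar>\<^sup>2 < \<bar>X n \<omega>\<bar>\<^sup>2" using big by simp
      then show "R < \<bar>X n \<omega>\<bar>" using power2_less_imp_less[of "\<bar>R\<bar>" "\<bar>X n \<omega>\<bar>"] by linarith
    qed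
    then have "prob {\<omega> \<in> space M. s / 2 \<le> X n \<omega> ^ 2} \<le> prob {\<omega> \<in> space M. R < \<bar>X n \<omega>\<bar>}"
      using X[of n] by (intro finite_measure_mono) measurable
    moreover have "1 / (4 * K) \<le> prob {\<omega> \<in> space M. s / 2 \<le> X n \<omega> ^ 2}"
    proof (rule prob_power2_ge_half_second_moment[OF X X4 s_def[symmetric] _ K])
      show "0 < s" using big zero_le_power2[of R] by linarith
      show "expectation (\<lambda>\<omega>. X n \<omega> ^ 4) \<le> K * s\<^sup>2" using fourth[of n] by (simp add: s_def)
    qed
    ultimately show False using N[OF that] by linarith
  qed
  then have "expectation (\<lambda>\<omega>. X n \<omega> ^ 2) \<le> max (2 * R\<^sup>2) (Max ((\<lambda>m. expectation (\<lambda>\<omega>. X m \<omega> ^ 2)) ` {..<N}))" for n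
    by (cases "n < N") (simp_all add: le_max_iff_disj)
  then show ?thesis by blast
qed

lemma second_moments_bounded_if_weak_conv:
  fixes X :: "nat \<Rightarrow> 'a \<Rightarrow> real"
  assumes X: "\<And>n. X n \<in> borel_measurable M" and X4: "\<And>n. integrable M (\<lambda>\<omega>. X n \<omega> ^ 4)"
    and K: "K > 0"
    and fourth: "\<And>n. expectation (\<lambda>\<omega>. X n \<omega> ^ 4) \<le> K * (expectation (\<lambda>\<omega>. X n \<omega> ^ 2))\<^sup>2"
    and weak_conv: "weak_conv_m (\<lambda>n. distr M borel (\<lambda>\<omega>. X n \<omega> + c)) G"
    and G: "real_distribution G" and no_atoms: "\<And>x. measure G {x} = 0"
  shows "\<exists>B. \<forall>n. expectation (\<lambda>\<omega>. X n \<omega> ^ 2) \<le> B"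
proof -
  have "(\<lambda>\<omega>. X n \<omega> + c) \<in> borel_measurable M" for n using X by measurable
  then obtain R where "\<forall>\<^sub>F n in sequentially. prob {\<omega> \<in> space M. R < \<bar>X n \<omega> + c\<bar>} < 1 / (4 * K)"
    using weak_conv_tail_prob_small[OF _ weak_conv G no_atoms, of "1 / (4 * K)"] K by auto
  then have "\<forall>\<^sub>F n in sequentially. prob {\<omega> \<in> space M. R + \<bar>c\<bar> < \<bar>X n \<omega>\<bar>} < 1 / (4 * K)"
    by eventually_elim (rule le_less_trans[OF finite_measure_mono], use X in \<open>auto simp: abs_if\<close>)
  then show ?thesis by (rule second_moments_bounded_if_tail_prob_small[OF X X4 K fourth])
qed

end

theorem lemma6p5:
  fixes M :: "'a measure" and Y :: "nat \<Rightarrow> 'a \<Rightarrow> real"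
    and g \<alpha> :: real and k :: "nat \<Rightarrow> nat" and lam :: "nat \<Rightarrow> nat \<Rightarrow> real"
  assumes "prob_space M"
    and "g > 0" and "\<alpha> > 0"
    and "prob_space.indep_vars M (\<lambda>_. borel) Y UNIV"
    and "\<And>i. distributed M lborel (Y i) (\<lambda>x. ennreal (gamma_density g x))"
    and "\<And>n i. i \<in> {1..k n} \<Longrightarrow> lam n i \<noteq> 0"
    and "\<And>n i. i \<in> {1..<k n} \<Longrightarrow> \<bar>lam n (Suc i)\<bar> \<le> \<bar>lam n i\<bar>"
    and "weak_conv_m
           (\<lambda>n. distr M borel (\<lambda>\<omega>. (\<Sum>i\<in>{1..k n}. lam n i * (Y i \<omega> - g)) + \<alpha>))
           (density lborel (\<lambda>x. ennreal (gamma_density \<alpha> x)))"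
  shows "(SUP n. \<integral>\<^sup>+ \<omega>. ennreal ((laguerre_L g {1..k n}
             (\<lambda>y. carre_du_champ {1..k n} (\<lambda>z. \<Sum>i\<in>{1..k n}. lam n i * (z i - g))
                                          (\<lambda>z. \<Sum>i\<in>{1..k n}. lam n i * (z i - g)) y
                  - ((\<Sum>i\<in>{1..k n}. lam n i * (y i - g)) + \<alpha>))
             (\<lambda>i. Y i \<omega>)) ^ 2) \<partial>M) < \<infinity>"
proof -
  interpret prob_space M by fact
  note g = \<open>g > 0\<close> and indep = assms(4) and Y = assms(5)
  define X where "X n \<omega> = (\<Sum>i\<in>{1..k n}. lam n i * (Y i \<omega> - g))" for n \<omega>
  define A where "A n = (\<Sum>i\<in>{1..k n}. (lam n i)\<^sup>2)" for n
  have "Y i \<in> borel_measurable M" for i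
    using indep by (simp add: indep_vars_def)
  then have X: "X n \<in> borel_measurable M" for n
    unfolding X_def by measurable
  define K where "K = 6 + 6 / g"
  have K: "K > 0" using g by (simp add: K_def add_pos_pos)
  have X4: "integrable M (\<lambda>\<omega>. X n \<omega> ^ 4)"
    and X2: "expectation (\<lambda>\<omega>. X n \<omega> ^ 2) = g * A n"
    and X4_le: "expectation (\<lambda>\<omega>. X n \<omega> ^ 4) \<le> K * (expectation (\<lambda>\<omega>. X n \<omega> ^ 2))\<^sup>2" for n
    unfolding X_def A_def K_def using centered_gamma_weighted_sum_moments[OF g indep Y] by auto
  obtain B where "g * A n \<le> B" for n
    using second_moments_bounded_if_weak_conv[OF X X4 K X4_le assms(8)[folded X_def]
        real_distribution_gamma[OF \<open>\<alpha> > 0\<close>] measure_density_lborel_singleton[OF borel_measurable_gamma_density]]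
      X2 by auto
  then have "g * (\<Sum>i\<in>{1..k n}. (lam n i - (lam n i)\<^sup>2)\<^sup>2) \<le> g * (2 * (B / g) + 2 * (B / g)\<^sup>2)" for n
    using g by (intro mult_left_mono sum_power2_diff_power2_le) (simp_all add: A_def field_simps mult.commute)
  then show ?thesis
    unfolding nn_integral_laguerre_L_square_gamma[OF g indep Y finite_atLeastAtMost]
    by (intro le_less_trans[OF SUP_least]) (auto intro: ennreal_leI)
qed

end
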